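(* Let $\gamma>0$, $n\ge1$, and for each $k\in\{1,\dots,n\}$ let $\hat\gamma(k)$ be an estimator of $\gamma$ satisfying the bias–variance condition (described in the context) with functions $V$ and $B$. Fix $\delta\in(0,1)$ and a nonempty grid $\mathcal K\subset\{1,\dots,n\}$ such that $(\delta,n,\mathcal K)$ is a sufficiently wide grid. Define $E(k)=\gamma V(k,\delta)+B(k,n,\delta)$. Then for all integers $k$ with $1\le k\le k^*(\delta,n)$, $$E(k)\le \min_{1\le j\le n}E(j)+\gamma V(k,\delta).$$
   Context: Bias–variance condition: there exist functions $V:\mathbb N\times(0,1)\to\mathbb R_+$ and $B:\mathbb N\times\mathbb N\times(0,1)\to\mathbb R_+$ such that for every $\delta\in(0,1)$ and every $k\in\{1,\dots,n\}$, with probability at least $1-\delta$, $|\hat\gamma(k)-\gamma|\le \gamma V(k,\delta)+B(k,n,\delta)$; moreover (a) for each $\delta$, $k\mapsto V(k,\delta)$ is non-increasing and $V(k,\delta)\to 0$ as $k\to\infty$; (b) $B$ is non-negative, $k\mapsto B(k,n,\delta)$ is non-decreasing, and $B(k,n,\delta)\to0$ as $k/n\to 0$. Sufficiently wide grid: with $k_{\min}=\min\mathcal K$, $k_{\max}=\max\mathcal K$, $B(k_{\min},n,\delta)\le\gamma V(k_{\min},\delta)$ and $B(k_{\max},n,\delta)>\gamma V(k_{\max},\delta)$. Oracle: $k^*(\delta,n)=\max\{k\in\mathcal K: B(k,n,\delta)\le \gamma V(k,\delta)\}$. *)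

theory Defs
  imports "HOL-Probability.Probability"
begin

text \<open>Natural-number arguments k range over positive integers.\<close>
definition bias_variance ::
  "'a measure \<Rightarrow> (nat \<Rightarrow> 'a \<Rightarrow> real) \<Rightarrow> real \<Rightarrow> nat \<Rightarrow>
   (nat \<Rightarrow> real \<Rightarrow> real) \<Rightarrow> (nat \<Rightarrow> nat \<Rightarrow> real \<Rightarrow> real) \<Rightarrow> bool" where
  "bias_variance M gh \<gamma> n V B \<longleftrightarrow>
     (\<forall>k \<delta>. 1 \<le> k \<longrightarrow> 0 < \<delta> \<longrightarrow> \<delta> < 1 \<longrightarrow> 0 \<le> V k \<delta>)
   \<and> (\<forall>k m \<delta>. 1 \<le> k \<longrightarrow> 1 \<le> m \<longrightarrow> 0 < \<delta> \<longrightarrow> \<delta> < 1 \<longrightarrow> 0 \<le> B k m \<delta>)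
   \<and> (\<forall>\<delta>. 0 < \<delta> \<longrightarrow> \<delta> < 1 \<longrightarrow> (\<forall>k\<in>{1..n}.
        measure M {\<omega> \<in> space M. \<bar>gh k \<omega> - \<gamma>\<bar> \<le> \<gamma> * V k \<delta> + B k n \<delta>} \<ge> 1 - \<delta>))
   \<and> (\<forall>\<delta>. 0 < \<delta> \<longrightarrow> \<delta> < 1 \<longrightarrow>
        (\<forall>k k'. 1 \<le> k \<longrightarrow> k \<le> k' \<longrightarrow> V k' \<delta> \<le> V k \<delta>)
        \<and> ((\<lambda>k. V k \<delta>) \<longlonglongrightarrow> 0))
   \<and> (\<forall>\<delta>. 0 < \<delta> \<longrightarrow> \<delta> < 1 \<longrightarrow>
        (\<forall>m k k'. 1 \<le> m \<longrightarrow> 1 \<le> k \<longrightarrow> k \<le> k' \<longrightarrow> B k m \<delta> \<le> B k' m \<delta>)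
        \<and> (\<forall>\<epsilon>>0. \<exists>\<eta>>0. \<forall>k m. 1 \<le> k \<longrightarrow> 1 \<le> m \<longrightarrow>
              real k / real m < \<eta> \<longrightarrow> B k m \<delta> < \<epsilon>))"

definition sufficiently_wide_grid ::
  "real \<Rightarrow> (nat \<Rightarrow> real \<Rightarrow> real) \<Rightarrow> (nat \<Rightarrow> nat \<Rightarrow> real \<Rightarrow> real) \<Rightarrow>
   real \<Rightarrow> nat \<Rightarrow> nat set \<Rightarrow> bool" where
  "sufficiently_wide_grid \<gamma> V B \<delta> n K \<longleftrightarrow>
     B (Min K) n \<delta> \<le> \<gamma> * V (Min K) \<delta> \<and> B (Max K) n \<delta> > \<gamma> * V (Max K) \<delta>"

definition oracle_k ::
  "real \<Rightarrow> (nat \<Rightarrow> real \<Rightarrow> real) \<Rightarrow> (nat \<Rightarrow> nat \<Rightarrow> real \<Rightarrow> real) \<Rightarrow>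
   real \<Rightarrow> nat \<Rightarrow> nat set \<Rightarrow> nat" where
  "oracle_k \<gamma> V B \<delta> n K = Max {k \<in> K. B k n \<delta> \<le> \<gamma> * V k \<delta>}"

end

theory Submission
  imports Defs
begin

text \<open>Write \<open>v j = \<gamma> V(j,\<delta>)\<close> and \<open>b j = B(j,n,\<delta>)\<close>, so \<open>E = v + b\<close> with \<open>v\<close> non-increasing,
  \<open>b\<close> non-decreasing and both non-negative. For \<open>k \<le> k\<^sup>*\<close> we have \<open>b k \<le> b k\<^sup>* \<le> v k\<^sup>*\<close>.
  Any \<open>j \<le> k\<^sup>*\<close> has \<open>v j \<ge> v k\<^sup>*\<close>, and any \<open>j > k\<^sup>*\<close> has \<open>b j \<ge> b k\<^sup>*\<close>; either way
  \<open>b k \<le> E j\<close>, hence \<open>E k = v k + b k \<le> min E + v k\<close>.\<close>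

lemma bias_le_error_of_crossing:
  fixes v b :: "nat \<Rightarrow> real"
  assumes v_antimono: "antimono_on {1..} v" and v_nonneg: "\<And>j. 1 \<le> j \<Longrightarrow> 0 \<le> v j"
    and b_mono: "mono_on {1..} b" and b_nonneg: "\<And>j. 1 \<le> j \<Longrightarrow> 0 \<le> b j"
    and crossing: "b ks \<le> v ks"
    and "1 \<le> k" "k \<le> ks" "1 \<le> j"
  shows "b k \<le> v j + b j"
proof -
  have "b k \<le> b ks"
    by (rule mono_onD[OF b_mono]) (use assms(6,7) in auto)
  moreover have "b ks \<le> v j + b j"
  proof (cases "j \<le> ks")
    case True
    then have "v ks \<le> v j"
      by (intro monotone_onD[OF v_antimono]) (use assms(8) in auto)
    then show ?thesis
      using crossing b_nonneg[OF assms(8)] by linarith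
  next
    case False
    then have "b ks \<le> b j"
      by (intro mono_onD[OF b_mono]) (use assms(6,7) in auto)
    then show ?thesis
      using v_nonneg[OF assms(8)] by linarith
  qed
  ultimately show ?thesis
    by linarith
qed

lemma bias_le_Min_error_of_crossing:
  fixes v b :: "nat \<Rightarrow> real"
  assumes "antimono_on {1..} v" "\<And>j. 1 \<le> j \<Longrightarrow> 0 \<le> v j"
    and "mono_on {1..} b" "\<And>j. 1 \<le> j \<Longrightarrow> 0 \<le> b j"
    and "b ks \<le> v ks" "1 \<le> k" "k \<le> ks" "1 \<le> n"
  shows "b k \<le> Min ((\<lambda>j. v j + b j) ` {1..n})"
  using bias_le_error_of_crossing[OF assms(1-7)] assms(8) by (subst Min_ge_iff) auto

lemma bias_variance_monotone:
  assumes bv: "bias_variance M gh \<gamma> n V B" and "0 < \<delta>" "\<delta> < 1" "\<gamma> \<ge> 0" "n \<ge> 1"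
  shows "antimono_on {1..} (\<lambda>j. \<gamma> * V j \<delta>)" "\<And>j. 1 \<le> j \<Longrightarrow> 0 \<le> \<gamma> * V j \<delta>"
    and "mono_on {1..} (\<lambda>j. B j n \<delta>)" "\<And>j. 1 \<le> j \<Longrightarrow> 0 \<le> B j n \<delta>"
proof -
  note conds = bv[unfolded bias_variance_def]
  have V_nonneg: "0 \<le> V j \<delta>" if "1 \<le> j" for j
    using conds[THEN conjunct1] assms(2,3) that by blast
  have B_nonneg: "0 \<le> B j n \<delta>" if "1 \<le> j" for j
    using conds[THEN conjunct2, THEN conjunct1] assms(2,3,5) that by blast
  have V_antimono: "V j \<delta> \<le> V i \<delta>" if "1 \<le> i" "i \<le> j" for i j
    using conds[THEN conjunct2, THEN conjunct2, THEN conjunct2, THEN conjunct1] assms(2,3) that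
    by blast
  have B_mono: "B i n \<delta> \<le> B j n \<delta>" if "1 \<le> i" "i \<le> j" for i j
    using conds[THEN conjunct2, THEN conjunct2, THEN conjunct2, THEN conjunct2] assms(2,3,5) that
    by blast
  show "antimono_on {1..} (\<lambda>j. \<gamma> * V j \<delta>)"
    using V_antimono assms(4) by (intro monotone_onI) (simp add: mult_left_mono)
  show "0 \<le> \<gamma> * V j \<delta>" if "1 \<le> j" for j
    using V_nonneg[OF that] assms(4) by simp
  show "mono_on {1..} (\<lambda>j. B j n \<delta>)"
    using B_mono by (intro mono_onI) simp
  show "0 \<le> B j n \<delta>" if "1 \<le> j" for j
    using B_nonneg[OF that] .
qed

lemma oracle_k_crossing:
  assumes "finite K" "K \<noteq> {}" "sufficiently_wide_grid \<gamma> V B \<delta> n K"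
  shows "B (oracle_k \<gamma> V B \<delta> n K) n \<delta> \<le> \<gamma> * V (oracle_k \<gamma> V B \<delta> n K) \<delta>"
proof -
  let ?S = "{k \<in> K. B k n \<delta> \<le> \<gamma> * V k \<delta>}"
  have "Min K \<in> ?S"
    using assms unfolding sufficiently_wide_grid_def by simp
  then have "Max ?S \<in> ?S"
    using assms(1) by (intro Max_in) auto
  then show ?thesis
    unfolding oracle_k_def by simp
qed

theorem proposition2:
  fixes M :: "'a measure" and gh :: "nat \<Rightarrow> 'a \<Rightarrow> real"
    and \<gamma> \<delta> :: real and n :: nat and K :: "nat set"
    and V :: "nat \<Rightarrow> real \<Rightarrow> real" and B :: "nat \<Rightarrow> nat \<Rightarrow> real \<Rightarrow> real"
  assumes "prob_space M"
    and "\<And>k. k \<in> {1..n} \<Longrightarrow> gh k \<in> borel_measurable M"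
    and "\<gamma> > 0" and "n \<ge> 1"
    and "bias_variance M gh \<gamma> n V B"
    and "0 < \<delta>" and "\<delta> < 1"
    and "K \<subseteq> {1..n}" and "K \<noteq> {}"
    and "sufficiently_wide_grid \<gamma> V B \<delta> n K"
    and "1 \<le> k" and "k \<le> oracle_k \<gamma> V B \<delta> n K"
  shows "\<gamma> * V k \<delta> + B k n \<delta>
           \<le> Min ((\<lambda>j. \<gamma> * V j \<delta> + B j n \<delta>) ` {1..n}) + \<gamma> * V k \<delta>"
proof -
  have "finite K"
    using assms(8) finite_subset by blast
  then have crossing: "B (oracle_k \<gamma> V B \<delta> n K) n \<delta> \<le> \<gamma> * V (oracle_k \<gamma> V B \<delta> n K) \<delta>"
    using oracle_k_crossing assms(9,10) by blast
  note monotone = bias_variance_monotone[OF assms(5-7) less_imp_le[OF assms(3)] assms(4)]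
  have "B k n \<delta> \<le> Min ((\<lambda>j. \<gamma> * V j \<delta> + B j n \<delta>) ` {1..n})"
    using bias_le_Min_error_of_crossing[OF monotone crossing assms(11,12,4)] .
  then show ?thesis
    by linarith
qed

end
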